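(* Let $\lambda=(\lambda_1,\dots,\lambda_l)$ and $\mu=(\mu_1,\dots,\mu_m)$ be decompositions of $n$ with $\lambda_l=1$ and $\mu_m\ge 2$, and let $\mu'=(\mu_1,\dots,\mu_{m-1},\mu_m-1,1)$. Then the index of $P_{\lambda|\mu'}$ in $P_{\lambda|\mu}$ is $2^{\mu_m-1}$.
   Context: A decomposition of $N$ is a finite sequence of positive integers with sum $N$. For a decomposition $\lambda=(\lambda_1,\dots,\lambda_l)$ of $N$, $P_\lambda\le\mathrm{GL}_N(\mathbb{F}_2)$ is the standard parabolic subgroup of invertible block upper triangular matrices with diagonal blocks of sizes $\lambda_1,\dots,\lambda_l$ in this order. $P_\mu^t$ is the group of transposes of elements of $P_\mu$, and $P_{\lambda|\mu}=P_\lambda\cap P_\mu^t$. *)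

theory Defs
  imports "HOL-Library.Z2" "Jordan_Normal_Form.Matrix"
begin

definition decomposition :: "nat \<Rightarrow> nat list \<Rightarrow> bool" where
  "decomposition N lam \<longleftrightarrow> (\<forall>x\<in>set lam. 0 < x) \<and> sum_list lam = N"

text \<open>Block index (0-based) of row/column i (0-based) w.r.t. the decomposition lam:
  the number of blocks lying entirely before position i.\<close>
definition blk :: "nat list \<Rightarrow> nat \<Rightarrow> nat" where
  "blk lam i = card {k. k < length lam \<and> sum_list (take (Suc k) lam) \<le> i}"

definition GL2 :: "nat \<Rightarrow> bit mat set" where
  "GL2 N = {A. A \<in> carrier_mat N N \<and> invertible_mat A}"

definition parabolic :: "nat list \<Rightarrow> bit mat set" where
  "parabolic lam = {A \<in> GL2 (sum_list lam).
     \<forall>i < sum_list lam. \<forall>j < sum_list lam. blk lam j < blk lam i \<longrightarrow> A $$ (i, j) = 0}"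

definition parabolic_t :: "nat list \<Rightarrow> bit mat set" where
  "parabolic_t mu = transpose_mat ` parabolic mu"

definition parabolic_int :: "nat list \<Rightarrow> nat list \<Rightarrow> bit mat set" where
  "parabolic_int lam mu = parabolic lam \<inter> parabolic_t mu"

definition subgroup_index :: "bit mat set \<Rightarrow> bit mat set \<Rightarrow> nat" where
  "subgroup_index G H = card ((\<lambda>A. (\<lambda>B. A * B) ` H) ` G)"

end

theory Submission
  imports Defs "HOL-Library.FuncSet" "Jordan_Normal_Form.Determinant"
begin

text \<open>
  Refining the last block of \<open>\<mu>\<close> into sizes \<open>\<mu>\<^sub>m - 1, 1\<close> only adds the condition that the
  last column vanish above the diagonal. Since \<open>\<lambda>\<^sub>l = 1\<close>, the last row of every \<open>A \<in> P\<^bsub>\<lambda>|\<mu>\<^esub>\<close> is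
  zero off the diagonal, so invertibility forces \<open>A\<^sub>n\<^sub>n = 1\<close>. Hence \<open>P\<^bsub>\<lambda>|\<mu>'\<^esub>\<close> is the stabiliser
  of the last basis vector \<open>e\<^sub>n\<close>, and its index is the size of the orbit of \<open>e\<^sub>n\<close>, i.e. the set
  of possible last columns. These are exactly the vectors with entry 1 at \<open>n\<close>, zero above the last
  block of \<open>\<mu>\<close>, and arbitrary in the other \<open>\<mu>\<^sub>m - 1\<close> positions of that block: every such
  vector is the last column of a unitriangular matrix in \<open>P\<^bsub>\<lambda>|\<mu>\<^esub>\<close>. That \<open>P\<^bsub>\<lambda>|\<mu>\<^esub>\<close> is closed under
  inverses follows from its finiteness.
\<close>

lemma sum_list_take_mono: "a \<le> b \<Longrightarrow> sum_list (take a xs) \<le> sum_list (take b (xs :: nat list))"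
  using take_add[of a "b - a" xs] by simp

lemma sum_list_butlast: "xs \<noteq> [] \<Longrightarrow> sum_list (butlast xs) = sum_list xs - last (xs :: nat list)"
  by (induction xs rule: rev_induct) auto

lemma less_blk_iff: "k < blk xs i \<longleftrightarrow> k < length xs \<and> sum_list (take (Suc k) xs) \<le> i"
proof -
  \<comment> \<open>prefix sums are monotone, so the set counted by \<open>blk\<close> is an initial segment\<close>
  define S where "S = {k. k < length xs \<and> sum_list (take (Suc k) xs) \<le> i}"
  have "finite S" unfolding S_def by simp
  then obtain c where c: "c \<notin> S" by (meson ex_new_if_finite infinite_UNIV_nat)
  define c0 where "c0 = (LEAST c. c \<notin> S)"
  have mem_S: "k \<in> S \<longleftrightarrow> k < c0" for k
  proof
    assume "k \<in> S"
    show "k < c0"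
    proof (rule ccontr)
      assume "\<not> k < c0"
      hence "c0 \<in> S"
        using \<open>k \<in> S\<close> sum_list_take_mono[of "Suc c0" "Suc k" xs] unfolding S_def by auto
      moreover have "c0 \<notin> S" using LeastI[of "\<lambda>c. c \<notin> S", OF c] unfolding c0_def .
      ultimately show False by contradiction
    qed
  next
    assume "k < c0"
    thus "k \<in> S" unfolding c0_def by (rule not_less_Least[THEN notnotD])
  qed
  hence "S = {..<c0}" by auto
  hence "blk xs i = c0" unfolding blk_def S_def by simp
  hence "k < blk xs i \<longleftrightarrow> k \<in> S" using mem_S by simp
  thus ?thesis unfolding S_def by simp
qed

lemma blk_mono: "i \<le> j \<Longrightarrow> blk xs i \<le> blk xs j"
  unfolding blk_def by (rule card_mono) auto

lemma blk_less_length: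
  assumes "i < sum_list xs"
  shows "blk xs i < length xs"
proof (rule ccontr)
  assume "\<not> blk xs i < length xs"
  moreover have "0 < length xs" using assms by (cases xs) auto
  ultimately have "length xs - 1 < blk xs i" by linarith
  hence "sum_list (take (length xs) xs) \<le> i" using less_blk_iff[of "length xs - 1" xs i] by simp
  thus False using assms by simp
qed

lemma blk_eq_last_iff:
  assumes "xs \<noteq> []" "i < sum_list xs"
  shows "blk xs i = length xs - 1 \<longleftrightarrow> sum_list xs - last xs \<le> i"
proof (cases "length xs = 1")
  case True
  then obtain y where "xs = [y]" by (auto simp: length_Suc_conv)
  thus ?thesis using blk_less_length[OF assms(2)] by simp
next
  case False
  define k where "k = length xs - 2"
  have Suc_k: "Suc k = length xs - 1" and k: "k < length xs"
    using False assms(1) unfolding k_def by (cases xs; auto)+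
  have "blk xs i = length xs - 1 \<longleftrightarrow> k < blk xs i"
    using blk_less_length[OF assms(2)] Suc_k by linarith
  also have "\<dots> \<longleftrightarrow> sum_list (take (length xs - 1) xs) \<le> i"
    unfolding less_blk_iff Suc_k using k by blast
  finally show ?thesis using sum_list_butlast[OF assms(1)] by (simp add: butlast_conv_take)
qed

lemma blk_last_le_iff:
  assumes "xs \<noteq> []" "0 < last xs" "i < sum_list xs"
  shows "blk xs (sum_list xs - 1) \<le> blk xs i \<longleftrightarrow> sum_list xs - last xs \<le> i"
proof -
  have "last xs \<le> sum_list xs" using assms(1) by (simp add: member_le_sum_list)
  hence "blk xs (sum_list xs - 1) = length xs - 1"
    using blk_eq_last_iff[OF assms(1), of "sum_list xs - 1"] assms(2,3) by simp
  thus ?thesis using blk_eq_last_iff[OF assms(1,3)] blk_less_length[OF assms(3)] by auto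
qed

lemma blk_split_last:
  assumes "xs \<noteq> []" "last xs = b + c" "i < sum_list (butlast xs) + b"
  shows "blk (butlast xs @ [b, c]) i = blk xs i"
proof -
  let ?ys = "butlast xs @ [b, c]"
  have "k < blk ?ys i \<longleftrightarrow> k < blk xs i" for k
  proof (cases "k < length xs - 1")
    case True
    hence "take (Suc k) ?ys = take (Suc k) xs" by (simp add: take_butlast)
    moreover have "k < length xs" using True by simp
    ultimately show ?thesis using True by (simp add: less_blk_iff)
  next
    case False
    have "take (length xs) ?ys = butlast xs @ [b]" using assms(1) by (cases xs rule: rev_cases) auto
    hence "sum_list (butlast xs) + b \<le> sum_list (take (Suc k) ?ys)"
      using sum_list_take_mono[of "length xs" "Suc k" ?ys] False by simp
    moreover have "sum_list (butlast xs) + b \<le> sum_list (take (Suc k) xs)"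
      using False assms(1,2) sum_list_butlast[OF assms(1)] member_le_sum_list[OF last_in_set[OF assms(1)]] by simp
    ultimately show ?thesis using assms(3) by (simp add: less_blk_iff)
  qed
  thus ?thesis by (metis nat_neq_iff less_irrefl)
qed

lemma blk_split_last_le_iff:
  assumes "xs \<noteq> []" "2 \<le> last xs" "i < sum_list xs" "j < sum_list xs"
  defines "ys \<equiv> butlast xs @ [last xs - 1, 1]"
  shows "blk ys j \<le> blk ys i \<longleftrightarrow> blk xs j \<le> blk xs i \<and> (j = sum_list xs - 1 \<longrightarrow> i = sum_list xs - 1)"
proof -
  define n where "n = sum_list xs"
  have sum_ys: "sum_list ys = n" and ys: "ys \<noteq> []" "last ys = 1"
    using assms(2) sum_list_butlast[OF assms(1)] member_le_sum_list[OF last_in_set[OF assms(1)]] assms(1)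
    unfolding ys_def n_def by auto
  have same: "blk ys k = blk xs k" if "k < n - 1" for k
    using blk_split_last[OF assms(1), of "last xs - 1" 1 k] that assms(2)
      sum_list_butlast[OF assms(1)] member_le_sum_list[OF last_in_set[OF assms(1)]] assms(1)
    unfolding ys_def n_def by simp
  have top: "\<not> blk ys (n - 1) \<le> blk ys k" if "k < n - 1" for k
    using blk_last_le_iff[OF ys(1), of k] ys(2) sum_ys that by simp
  show ?thesis
  proof (cases "i = n - 1")
    case True
    thus ?thesis using blk_mono[of j "n - 1"] assms(4) unfolding n_def by simp
  next
    case False
    hence i: "i < n - 1" using assms(3) unfolding n_def by simp
    show ?thesis
    proof (cases "j = n - 1")
      case True
      thus ?thesis using top[OF i] i unfolding n_def by auto
    next
      case False
      thus ?thesis using same[OF i] same[of j] assms(4) i unfolding n_def by auto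
    qed
  qed
qed

lemma mult_mat_vec_unit_vec:
  fixes A :: "'a::semiring_1 mat"
  assumes "A \<in> carrier_mat nr n" "j < n"
  shows "A *\<^sub>v unit_vec n j = col A j"
  using assms by (intro eq_vecI) auto

lemma invertible_mat_iff_inverse:
  assumes "A \<in> carrier_mat n n"
  shows "invertible_mat A \<longleftrightarrow> (\<exists>B \<in> carrier_mat n n. A * B = 1\<^sub>m n \<and> B * A = 1\<^sub>m n)"
proof
  assume "invertible_mat A"
  then obtain B where AB: "A * B = 1\<^sub>m n" and BA: "B * A = 1\<^sub>m (dim_row B)"
    using assms unfolding invertible_mat_def inverts_mat_def by auto
  have "B \<in> carrier_mat n n"
    using arg_cong[OF AB, of dim_col] arg_cong[OF BA, of dim_col] assms by auto
  thus "\<exists>B \<in> carrier_mat n n. A * B = 1\<^sub>m n \<and> B * A = 1\<^sub>m n" using AB BA by auto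
qed (use assms in \<open>auto simp: invertible_mat_def inverts_mat_def\<close>)

lemma invertible_mat_mult:
  fixes A B :: "'a::semiring_1 mat"
  assumes "A \<in> carrier_mat n n" "B \<in> carrier_mat n n" "invertible_mat A" "invertible_mat B"
  shows "invertible_mat (A * B)"
proof -
  obtain A' where A': "A' \<in> carrier_mat n n" "A * A' = 1\<^sub>m n" "A' * A = 1\<^sub>m n"
    using assms(1,3) invertible_mat_iff_inverse by blast
  obtain B' where B': "B' \<in> carrier_mat n n" "B * B' = 1\<^sub>m n" "B' * B = 1\<^sub>m n"
    using assms(2,4) invertible_mat_iff_inverse by blast
  have "(A * B) * (B' * A') = A * (B * B') * A'" "(B' * A') * (A * B) = B' * (A' * A) * B"
    using assms(1,2) A'(1) B'(1) by (simp_all add: assoc_mult_mat[of _ n n _ n _ n])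
  hence "(A * B) * (B' * A') = 1\<^sub>m n" "(B' * A') * (A * B) = 1\<^sub>m n"
    using assms(1,2) A' B' by simp_all
  moreover have "A * B \<in> carrier_mat n n" "B' * A' \<in> carrier_mat n n"
    using assms(1,2) A'(1) B'(1) by auto
  ultimately show ?thesis using invertible_mat_iff_inverse by blast
qed

lemma invertible_mat_transpose:
  fixes A :: "'a::comm_semiring_1 mat"
  assumes "A \<in> carrier_mat n n" "invertible_mat A"
  shows "invertible_mat (transpose_mat A)"
proof -
  obtain B where B: "B \<in> carrier_mat n n" "A * B = 1\<^sub>m n" "B * A = 1\<^sub>m n"
    using assms invertible_mat_iff_inverse by blast
  have "transpose_mat A * transpose_mat B = 1\<^sub>m n" "transpose_mat B * transpose_mat A = 1\<^sub>m n"
    by (metis transpose_mult[OF B(1) assms(1)] B(3) transpose_one,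
        metis transpose_mult[OF assms(1) B(1)] B(2) transpose_one)
  moreover have "transpose_mat A \<in> carrier_mat n n" "transpose_mat B \<in> carrier_mat n n"
    using assms(1) B(1) by auto
  ultimately show ?thesis using invertible_mat_iff_inverse by blast
qed

lemma invertible_mat_row_nonzero:
  assumes "A \<in> carrier_mat n n" "invertible_mat A" "i < n"
  shows "\<exists>j < n. A $$ (i, j) \<noteq> 0"
proof (rule ccontr)
  obtain B where B: "B \<in> carrier_mat n n" "A * B = 1\<^sub>m n"
    using assms(1,2) invertible_mat_iff_inverse by blast
  assume "\<not> (\<exists>j < n. A $$ (i, j) \<noteq> 0)"
  hence "(A * B) $$ (i, i) = 0" using assms(1,3) B(1) by (simp add: scalar_prod_def)
  thus False using B(2) assms(3) by simp
qed

lemma invertible_mat_upper_triangular: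
  fixes A :: "'a::field mat"
  assumes "A \<in> carrier_mat n n" "upper_triangular A" "\<And>i. i < n \<Longrightarrow> A $$ (i, i) \<noteq> 0"
  shows "invertible_mat A"
proof -
  have "det A \<noteq> 0"
    using det_upper_triangular[OF assms(2,1)] assms(1,3) by (auto simp: diag_mat_def)
  hence "A \<in> Units (ring_mat TYPE('a) n undefined)" by (rule det_non_zero_imp_unit[OF assms(1)])
  thus ?thesis using invertible_mat_iff_inverse[OF assms(1)] by (auto simp: Units_def ring_mat_simps)
qed

lemma finite_carrier_mat:
  assumes "finite (UNIV :: 'a set)"
  shows "finite (carrier_mat nr nc :: 'a mat set)"
proof -
  let ?entries = "\<lambda>A :: 'a mat. restrict (\<lambda>p. A $$ p) ({..<nr} \<times> {..<nc})"
  have "inj_on ?entries (carrier_mat nr nc)"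
  proof (rule inj_onI)
    fix A B :: "'a mat"
    assume A: "A \<in> carrier_mat nr nc" and B: "B \<in> carrier_mat nr nc"
      and entries: "?entries A = ?entries B"
    have "A $$ (i, j) = B $$ (i, j)" if "i < nr" "j < nc" for i j
      using fun_cong[OF entries, of "(i, j)"] that by simp
    thus "A = B" using A B by (intro eq_matI) auto
  qed
  moreover have "?entries ` carrier_mat nr nc \<subseteq> ({..<nr} \<times> {..<nc}) \<rightarrow>\<^sub>E UNIV"
    by (simp add: image_subset_iff)
  moreover have "finite (({..<nr} \<times> {..<nc}) \<rightarrow>\<^sub>E (UNIV :: 'a set))"
    using assms by (simp add: finite_PiE)
  ultimately show ?thesis by (meson finite_imageD finite_subset)
qed

lemma finite_submonoid_mat_inverse:
  fixes S :: "'a::semiring_1 mat set"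
  assumes "finite S" "S \<subseteq> carrier_mat n n" "1\<^sub>m n \<in> S" "\<And>A B. A \<in> S \<Longrightarrow> B \<in> S \<Longrightarrow> A * B \<in> S"
    and "A \<in> S" "invertible_mat A"
  shows "\<exists>B \<in> S. A * B = 1\<^sub>m n \<and> B * A = 1\<^sub>m n"
proof -
  have A: "A \<in> carrier_mat n n" using assms(2,5) by auto
  obtain A' where A': "A' \<in> carrier_mat n n" "A * A' = 1\<^sub>m n" "A' * A = 1\<^sub>m n"
    using A assms(6) invertible_mat_iff_inverse by blast
  have cancel: "A' * (A * X) = X" if "X \<in> carrier_mat n n" for X
    using that A A' by (simp add: assoc_mult_mat[of _ n n _ n _ n, symmetric])
  \<comment> \<open>left multiplication by \<open>A\<close> is injective on the finite set \<open>S\<close>, hence onto \<open>S\<close>\<close>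
  have "inj_on ((*) A) S"
    by (rule inj_onI) (metis cancel assms(2) subsetD)
  moreover have "(*) A ` S \<subseteq> S" using assms(4,5) by auto
  ultimately have "(*) A ` S = S" using assms(1) by (simp add: endo_inj_surj)
  then obtain X where X: "X \<in> S" "A * X = 1\<^sub>m n" using assms(3) by (metis imageE)
  have "X = A'" using cancel[of X] X A' assms(2) by auto
  thus ?thesis using X A' by auto
qed

definition incidence_mats :: "nat \<Rightarrow> (nat \<Rightarrow> nat \<Rightarrow> bool) \<Rightarrow> 'a::zero mat set" where
  "incidence_mats n R = {A \<in> carrier_mat n n. \<forall>i<n. \<forall>j<n. \<not> R i j \<longrightarrow> A $$ (i, j) = 0}"

lemma incidence_mats_conj:
  "incidence_mats n (\<lambda>i j. R i j \<and> S i j) = incidence_mats n R \<inter> incidence_mats n S"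
  unfolding incidence_mats_def by auto

lemma incidence_mats_cong:
  "(\<And>i j. i < n \<Longrightarrow> j < n \<Longrightarrow> R i j = S i j) \<Longrightarrow> incidence_mats n R = incidence_mats n S"
  unfolding incidence_mats_def by auto

lemma one_mat_in_incidence_mats: "reflp R \<Longrightarrow> 1\<^sub>m n \<in> incidence_mats n R"
  unfolding incidence_mats_def by (auto dest: reflpD)

lemma mult_in_incidence_mats:
  fixes A B :: "'a::semiring_0 mat"
  assumes "transp R" "A \<in> incidence_mats n R" "B \<in> incidence_mats n R"
  shows "A * B \<in> incidence_mats n R"
proof -
  have carriers: "A \<in> carrier_mat n n" "B \<in> carrier_mat n n"
    using assms(2,3) unfolding incidence_mats_def by auto
  have "(A * B) $$ (i, j) = 0" if "i < n" "j < n" "\<not> R i j" for i j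
  proof -
    have "A $$ (i, k) * B $$ (k, j) = 0" if "k < n" for k
    proof (cases "R i k")
      case True
      hence "\<not> R k j" using assms(1) \<open>\<not> R i j\<close> by (meson transpD)
      thus ?thesis using assms(3) \<open>k < n\<close> \<open>j < n\<close> unfolding incidence_mats_def by simp
    next
      case False
      thus ?thesis using assms(2) \<open>i < n\<close> \<open>k < n\<close> unfolding incidence_mats_def by simp
    qed
    thus ?thesis using carriers that by (simp add: scalar_prod_def)
  qed
  thus ?thesis using carriers unfolding incidence_mats_def by auto
qed

definition mat_group :: "nat \<Rightarrow> 'a::semiring_1 mat set \<Rightarrow> bool" where
  "mat_group n G \<longleftrightarrow> G \<subseteq> carrier_mat n n \<and> (\<forall>A\<in>G. \<forall>B\<in>G. A * B \<in> G)
     \<and> (\<forall>A\<in>G. \<exists>B\<in>G. A * B = 1\<^sub>m n \<and> B * A = 1\<^sub>m n)"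

lemma mat_group_invertible_incidence_mats:
  assumes "finite (UNIV :: 'a::semiring_1 set)" "reflp R" "transp R"
  shows "mat_group n {A \<in> (incidence_mats n R :: 'a mat set). invertible_mat A}"
proof -
  let ?G = "{A \<in> (incidence_mats n R :: 'a mat set). invertible_mat A}"
  have carrier: "?G \<subseteq> carrier_mat n n" unfolding incidence_mats_def by auto
  have mult: "A * B \<in> ?G" if "A \<in> ?G" "B \<in> ?G" for A B
    using that carrier mult_in_incidence_mats[OF assms(3)] invertible_mat_mult by blast
  have "1\<^sub>m n \<in> ?G"
    using one_mat_in_incidence_mats[OF assms(2)] invertible_mat_iff_inverse[of "1\<^sub>m n" n] by auto
  moreover have "finite ?G" using finite_subset[OF carrier finite_carrier_mat[OF assms(1)]] .
  ultimately have "\<exists>B\<in>?G. A * B = 1\<^sub>m n \<and> B * A = 1\<^sub>m n" if "A \<in> ?G" for A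
    using finite_submonoid_mat_inverse[OF _ carrier _ mult] that by blast
  thus ?thesis unfolding mat_group_def using carrier mult by blast
qed

lemma subgroup_index_stabilizer:
  fixes G :: "bit mat set"
  assumes "mat_group n G" "v \<in> carrier_vec n"
  shows "subgroup_index G {A \<in> G. A *\<^sub>v v = v} = card ((\<lambda>A. A *\<^sub>v v) ` G)"
proof -
  let ?H = "{A \<in> G. A *\<^sub>v v = v}"
  have G: "G \<subseteq> carrier_mat n n" "\<And>A B. A \<in> G \<Longrightarrow> B \<in> G \<Longrightarrow> A * B \<in> G"
    using assms(1) unfolding mat_group_def by auto
  have coset: "(\<lambda>B. A * B) ` ?H = {C \<in> G. C *\<^sub>v v = A *\<^sub>v v}" if A: "A \<in> G" for A
  proof (intro equalityI subsetI)
    fix C assume "C \<in> (\<lambda>B. A * B) ` ?H"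
    then obtain B where B: "B \<in> G" "B *\<^sub>v v = v" and C: "C = A * B" by auto
    have "A \<in> carrier_mat n n" "B \<in> carrier_mat n n" using A B(1) G(1) by auto
    hence "C *\<^sub>v v = A *\<^sub>v v" unfolding C using B(2) assms(2) by simp
    thus "C \<in> {C \<in> G. C *\<^sub>v v = A *\<^sub>v v}" using A B(1) G(2) C by simp
  next
    fix C assume C: "C \<in> {C \<in> G. C *\<^sub>v v = A *\<^sub>v v}"
    obtain A' where A': "A' \<in> G" "A' * A = 1\<^sub>m n" "A * A' = 1\<^sub>m n"
      using A assms(1) unfolding mat_group_def by blast
    have carriers: "A \<in> carrier_mat n n" "A' \<in> carrier_mat n n" "C \<in> carrier_mat n n"
      using A A'(1) C G(1) by auto
    have "(A' * C) *\<^sub>v v = (A' * A) *\<^sub>v v" using C carriers assms(2) by simp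
    hence "A' * C \<in> ?H" using A'(1,2) C G(2) assms(2) by simp
    moreover have "A * (A' * C) = C"
      using carriers A'(3) by (simp add: assoc_mult_mat[of _ n n _ n _ n, symmetric])
    ultimately show "C \<in> (\<lambda>B. A * B) ` ?H" by (metis image_eqI)
  qed
  have "(\<lambda>A. (\<lambda>B. A * B) ` ?H) ` G = (\<lambda>w. {C \<in> G. C *\<^sub>v v = w}) ` (\<lambda>A. A *\<^sub>v v) ` G"
    unfolding image_image by (rule image_cong) (simp_all add: coset)
  moreover have "inj_on (\<lambda>w. {C \<in> G. C *\<^sub>v v = w}) ((\<lambda>A. A *\<^sub>v v) ` G)"
    by (rule inj_onI) blast
  ultimately show ?thesis unfolding subgroup_index_def by (simp add: card_image)
qed

lemma card_vecs_fixed_outside: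
  fixes c :: "nat \<Rightarrow> 'a"
  assumes "finite (UNIV :: 'a set)" "F \<subseteq> {..<n}"
  shows "card {v \<in> carrier_vec n. \<forall>i<n. i \<notin> F \<longrightarrow> v $ i = c i} = card (UNIV :: 'a set) ^ card F"
proof -
  define V where "V = {v \<in> carrier_vec n. \<forall>i<n. i \<notin> F \<longrightarrow> v $ i = c i}"
  define h where "h f = vec n (\<lambda>i. if i \<in> F then f i else c i)" for f :: "nat \<Rightarrow> 'a"
  have "bij_betw h (F \<rightarrow>\<^sub>E UNIV) V"
  proof (rule bij_betw_imageI)
    show "inj_on h (F \<rightarrow>\<^sub>E UNIV)"
    proof (rule inj_onI)
      fix f g assume f: "f \<in> F \<rightarrow>\<^sub>E UNIV" and g: "g \<in> F \<rightarrow>\<^sub>E UNIV" and hfg: "h f = h g"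
      show "f = g"
      proof (rule PiE_ext[OF f g])
        fix i assume "i \<in> F"
        moreover have "i < n" using \<open>i \<in> F\<close> assms(2) by auto
        ultimately have "h f $ i = f i" "h g $ i = g i" unfolding h_def by simp_all
        thus "f i = g i" using hfg by simp
      qed
    qed
    show "h ` (F \<rightarrow>\<^sub>E UNIV) = V"
    proof (intro equalityI subsetI)
      fix v assume "v \<in> V"
      hence "v = h (restrict (\<lambda>i. v $ i) F)" unfolding V_def h_def by (intro eq_vecI) auto
      moreover have "restrict (\<lambda>i. v $ i) F \<in> F \<rightarrow>\<^sub>E UNIV" by simp
      ultimately show "v \<in> h ` (F \<rightarrow>\<^sub>E UNIV)" by blast
    qed (auto simp: V_def h_def)
  qed
  hence "card V = card (F \<rightarrow>\<^sub>E (UNIV :: 'a set))" by (simp add: bij_betw_same_card)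
  also have "\<dots> = card (UNIV :: 'a set) ^ card F"
    using finite_subset[OF assms(2)] by (simp add: card_PiE)
  finally show ?thesis unfolding V_def .
qed

lemma UNIV_bit: "(UNIV :: bit set) = {0, 1}"
  using bit_not_zero_iff by auto

definition parabolic_order :: "nat list \<Rightarrow> nat list \<Rightarrow> nat \<Rightarrow> nat \<Rightarrow> bool" where
  "parabolic_order lam mu i j \<longleftrightarrow> blk lam i \<le> blk lam j \<and> blk mu j \<le> blk mu i"

lemma parabolic_int_eq:
  assumes "sum_list lam = n" "sum_list mu = n"
  shows "parabolic_int lam mu = {A \<in> incidence_mats n (parabolic_order lam mu). invertible_mat A}"
proof -
  have transpose: "A \<in> parabolic_t mu \<longleftrightarrow> transpose_mat A \<in> parabolic mu" for A
    unfolding parabolic_t_def by (metis image_eqI imageE transpose_transpose)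
  have invertible: "invertible_mat (transpose_mat A) \<longleftrightarrow> invertible_mat A"
    if "A \<in> carrier_mat n n" for A :: "bit mat"
    using that invertible_mat_transpose[of A n] invertible_mat_transpose[of "transpose_mat A" n] by auto
  show ?thesis
  proof (rule Set.set_eqI)
    fix A :: "bit mat"
    show "A \<in> parabolic_int lam mu \<longleftrightarrow> A \<in> {A \<in> incidence_mats n (parabolic_order lam mu). invertible_mat A}"
      unfolding parabolic_int_def Int_iff transpose parabolic_def GL2_def mem_Collect_eq
        incidence_mats_def parabolic_order_def
      using assms invertible[of A] by (auto simp: not_le)
  qed
qed

lemma mat_group_parabolic_int:
  assumes "sum_list lam = n" "sum_list mu = n"
  shows "mat_group n (parabolic_int lam mu)"
  unfolding parabolic_int_eq[OF assms]
  by (rule mat_group_invertible_incidence_mats) (auto simp: UNIV_bit reflp_def transp_def parabolic_order_def)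

lemma parabolic_int_last_diag:
  assumes "sum_list lam = n" "sum_list mu = n" "lam \<noteq> []" "last lam = 1" "A \<in> parabolic_int lam mu"
  shows "A $$ (n - 1, n - 1) = 1"
proof -
  have n: "0 < n" using assms(1,3,4) member_le_sum_list[OF last_in_set[OF assms(3)]] by simp
  have A: "A \<in> carrier_mat n n" "invertible_mat A" "A \<in> incidence_mats n (parabolic_order lam mu)"
    using assms(5) unfolding parabolic_int_eq[OF assms(1,2)] incidence_mats_def by auto
  have zero: "A $$ (n - 1, j) = 0" if "j < n - 1" for j
  proof -
    have "\<not> blk lam (n - 1) \<le> blk lam j"
      using blk_last_le_iff[OF assms(3), of j] assms(1,4) that by simp
    thus ?thesis using A(3) that unfolding incidence_mats_def parabolic_order_def by auto
  qed
  obtain j where j: "j < n" "A $$ (n - 1, j) \<noteq> 0"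
    using invertible_mat_row_nonzero[OF A(1,2), of "n - 1"] n by auto
  have "j = n - 1"
  proof (rule ccontr)
    assume "j \<noteq> n - 1"
    thus False using zero[of j] j by simp
  qed
  thus ?thesis using j(2) by simp
qed

lemma parabolic_int_split_last_eq_stabilizer:
  assumes "sum_list lam = n" "lam \<noteq> []" "last lam = 1" "sum_list mu = n" "mu \<noteq> []" "2 \<le> last mu"
  shows "parabolic_int lam (butlast mu @ [last mu - 1, 1])
    = {A \<in> parabolic_int lam mu. A *\<^sub>v unit_vec n (n - 1) = unit_vec n (n - 1)}"
proof -
  let ?mu' = "butlast mu @ [last mu - 1, 1]"
  have last_le: "last mu \<le> n" using member_le_sum_list[OF last_in_set[OF assms(5)]] assms(4) by simp
  have sum': "sum_list ?mu' = n"
    using sum_list_butlast[OF assms(5)] assms(4,6) last_le by simp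
  have "incidence_mats n (parabolic_order lam ?mu')
    = incidence_mats n (parabolic_order lam mu) \<inter> incidence_mats n (\<lambda>i j. j = n - 1 \<longrightarrow> i = n - 1)"
    unfolding incidence_mats_conj[symmetric]
    by (rule incidence_mats_cong) (use blk_split_last_le_iff[OF assms(5,6)] assms(4) in \<open>auto simp: parabolic_order_def\<close>)
  moreover have "A \<in> incidence_mats n (\<lambda>i j. j = n - 1 \<longrightarrow> i = n - 1)
      \<longleftrightarrow> A *\<^sub>v unit_vec n (n - 1) = unit_vec n (n - 1)"
    if A: "A \<in> parabolic_int lam mu" for A
  proof -
    have "A \<in> carrier_mat n n" using A parabolic_int_eq[OF assms(1,4)] incidence_mats_def by auto
    moreover have "A $$ (n - 1, n - 1) = 1" using parabolic_int_last_diag[OF assms(1,4,2,3) A] .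
    moreover have "0 < n" using last_le assms(6) by simp
    ultimately show ?thesis unfolding incidence_mats_def
      by (auto simp: mult_mat_vec_unit_vec vec_eq_iff)
  qed
  ultimately show ?thesis using parabolic_int_eq[OF assms(1,4)] parabolic_int_eq[OF assms(1) sum'] by auto
qed

lemma last_column_completion_in_parabolic_int:
  assumes "sum_list lam = n" "sum_list mu = n" "mu \<noteq> []" "0 < last mu"
    and "v \<in> carrier_vec n" "v $ (n - 1) = 1" "\<And>i. i < n - last mu \<Longrightarrow> v $ i = 0"
  shows "mat n n (\<lambda>(i, j). if j = n - 1 then v $ i else of_bool (i = j)) \<in> parabolic_int lam mu"
proof -
  define U where "U = mat n n (\<lambda>(i, j). if j = n - 1 then v $ i else of_bool (i = j) :: bit)"
  have U: "U \<in> carrier_mat n n"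
    "\<And>i j. i < n \<Longrightarrow> j < n \<Longrightarrow> U $$ (i, j) = (if j = n - 1 then v $ i else of_bool (i = j))"
    unfolding U_def by auto
  have "invertible_mat U"
    by (rule invertible_mat_upper_triangular[OF U(1)]) (use U assms(6) in \<open>auto simp: upper_triangular_def\<close>)
  moreover have "U $$ (i, j) = 0" if "i < n" "j < n" "\<not> parabolic_order lam mu i j" for i j
  proof (cases "j = n - 1")
    case True
    hence "i < n - last mu"
      using that blk_last_le_iff[OF assms(3,4), of i] blk_mono[of i "n - 1" lam] assms(2)
      unfolding parabolic_order_def by auto
    thus ?thesis using U(2)[OF that(1,2)] assms(7) True by simp
  next
    case False
    moreover have "i \<noteq> j" using that(3) unfolding parabolic_order_def by auto
    ultimately show ?thesis using U(2)[OF that(1,2)] by simp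
  qed
  ultimately show ?thesis
    using U(1) unfolding U_def[symmetric] parabolic_int_eq[OF assms(1,2)] incidence_mats_def by auto
qed

lemma parabolic_int_orbit_last_unit_vec:
  assumes "sum_list lam = n" "lam \<noteq> []" "last lam = 1" "sum_list mu = n" "mu \<noteq> []" "0 < last mu"
  shows "(\<lambda>A. A *\<^sub>v unit_vec n (n - 1)) ` parabolic_int lam mu
    = {v \<in> carrier_vec n. \<forall>i<n. i \<notin> {n - last mu..<n - 1} \<longrightarrow> v $ i = of_bool (i = n - 1)}"
    (is "?orbit = ?V")
proof (intro equalityI subsetI)
  have n: "0 < n" using member_le_sum_list[OF last_in_set[OF assms(5)]] assms(4,6) by simp
  {
    fix v assume "v \<in> ?orbit"
    then obtain A where A: "A \<in> parabolic_int lam mu" and v: "v = A *\<^sub>v unit_vec n (n - 1)" by auto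
    have A_inc: "A \<in> incidence_mats n (parabolic_order lam mu)" and A_carrier: "A \<in> carrier_mat n n"
      using A parabolic_int_eq[OF assms(1,4)] incidence_mats_def by auto
    have "A $$ (i, n - 1) = 0" if "i < n - last mu" for i
      using A_inc blk_last_le_iff[OF assms(5,6), of i] assms(4) n that
      unfolding incidence_mats_def parabolic_order_def by auto
    moreover have "A $$ (n - 1, n - 1) = 1" using parabolic_int_last_diag[OF assms(1,4,2,3) A] .
    ultimately show "v \<in> ?V" using v A_carrier n by (auto simp: mult_mat_vec_unit_vec)
  next
    fix v assume "v \<in> ?V"
    hence v: "v \<in> carrier_vec n" "v $ (n - 1) = 1" "\<And>i. i < n - last mu \<Longrightarrow> v $ i = 0"
      using n assms(6) by auto
    let ?U = "mat n n (\<lambda>(i, j). if j = n - 1 then v $ i else of_bool (i = j))"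
    have "v = ?U *\<^sub>v unit_vec n (n - 1)"
      using v(1) n by (auto simp: mult_mat_vec_unit_vec)
    moreover have "?U \<in> parabolic_int lam mu"
      by (rule last_column_completion_in_parabolic_int[OF assms(1,4,5,6) v])
    ultimately show "v \<in> ?orbit" by (rule image_eqI)
  }
qed

theorem corollary2:
  fixes n :: nat and lam mu :: "nat list"
  assumes "decomposition n lam" and "decomposition n mu"
    and "lam \<noteq> []" and "last lam = 1"
    and "mu \<noteq> []" and "last mu \<ge> 2"
  shows "parabolic_int lam (butlast mu @ [last mu - 1, 1]) \<subseteq> parabolic_int lam mu
       \<and> subgroup_index (parabolic_int lam mu) (parabolic_int lam (butlast mu @ [last mu - 1, 1]))
           = 2 ^ (last mu - 1)"
proof -
  let ?e = "unit_vec n (n - 1)"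
  let ?V = "{v \<in> carrier_vec n. \<forall>i<n. i \<notin> {n - last mu..<n - 1} \<longrightarrow> v $ i = of_bool (i = n - 1)}
    :: bit vec set"
  have sums: "sum_list lam = n" "sum_list mu = n" using assms(1,2) unfolding decomposition_def by auto
  have last_le: "last mu \<le> n" using member_le_sum_list[OF last_in_set[OF assms(5)]] sums(2) by simp
  note stabilizer = parabolic_int_split_last_eq_stabilizer[OF sums(1) assms(3,4) sums(2) assms(5,6)]
  have "subgroup_index (parabolic_int lam mu) (parabolic_int lam (butlast mu @ [last mu - 1, 1]))
      = card ((\<lambda>A. A *\<^sub>v ?e) ` parabolic_int lam mu)"
    unfolding stabilizer by (rule subgroup_index_stabilizer[OF mat_group_parabolic_int[OF sums]]) simp
  also have "(\<lambda>A. A *\<^sub>v ?e) ` parabolic_int lam mu = ?V"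
    using parabolic_int_orbit_last_unit_vec[OF sums(1) assms(3,4) sums(2) assms(5)] assms(6) by simp
  also have "card ?V = card (UNIV :: bit set) ^ card {n - last mu..<n - 1}"
    by (rule card_vecs_fixed_outside) (auto simp: UNIV_bit)
  also have "\<dots> = 2 ^ (last mu - 1)" using last_le assms(6) by (simp add: UNIV_bit numeral_2_eq_2)
  finally show ?thesis using stabilizer by auto
qed

end
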